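(* Let $G$ be a group generated by a set $X$, let $H$ be a normal subgroup of $G$, and let $\bar G=G/H$ with generating set $\bar X$ the image of $X$. Then $$\mathrm{pw}(\bar G,\bar X)\le \mathrm{pw}(G,X)\le \mathrm{pw}(\bar G,\bar X)+\mathrm{pw}(H,X).$$
   Context: A palindrome in a group generated by a set $X$ is an element represented by a reduced word in $X^{\pm1}$ reading the same forwards and backwards; $l_{\mathcal P}(g)$ is the minimal number of palindromes (in $X^{\pm1}$) whose product is $g$; $\mathrm{pw}(G,X)=\sup_{g\in G}l_{\mathcal P}(g)$. For a subgroup $H\le G$, $\mathrm{pw}(H,X)=\sup_{h\in H} l_{\mathcal P}(h)$, where palindromes are taken in $G$ with respect to the alphabet $X^{\pm1}$. *)

theory Defs
  imports "HOL-Algebra.Algebra" "HOL-Library.Extended_Nat"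
begin

text \<open>Words over the alphabet A^{+-1}: a letter is a pair (x, b), standing for x if b
  and for the inverse of x if not b.\<close>

definition eval_word :: "('a, 'b) monoid_scheme \<Rightarrow> ('a \<times> bool) list \<Rightarrow> 'a" where
  "eval_word G w = foldr (\<lambda>(x, b) acc. (if b then x else inv\<^bsub>G\<^esub> x) \<otimes>\<^bsub>G\<^esub> acc) w \<one>\<^bsub>G\<^esub>"

definition reduced_word :: "('a \<times> bool) list \<Rightarrow> bool" where
  "reduced_word w \<longleftrightarrow>
     (\<forall>i. Suc i < length w \<longrightarrow> \<not> (fst (w ! i) = fst (w ! Suc i) \<and> snd (w ! i) \<noteq> snd (w ! Suc i)))"

definition palindromes :: "('a, 'b) monoid_scheme \<Rightarrow> 'a set \<Rightarrow> 'a set" where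
  "palindromes G A = eval_word G ` {w. fst ` set w \<subseteq> A \<and> reduced_word w \<and> rev w = w}"

text \<open>Palindromic length: minimal number of palindromes whose product is g (infinity if none).\<close>
definition pal_length :: "('a, 'b) monoid_scheme \<Rightarrow> 'a set \<Rightarrow> 'a \<Rightarrow> enat" where
  "pal_length G A g = Inf ((\<lambda>ps. enat (length ps)) ` {ps.
      set ps \<subseteq> palindromes G A \<and> foldr (\<lambda>p acc. p \<otimes>\<^bsub>G\<^esub> acc) ps \<one>\<^bsub>G\<^esub> = g})"

definition pw_sub :: "('a, 'b) monoid_scheme \<Rightarrow> 'a set \<Rightarrow> 'a set \<Rightarrow> enat" where
  "pw_sub G A S = (SUP g\<in>S. pal_length G A g)"

definition pw :: "('a, 'b) monoid_scheme \<Rightarrow> 'a set \<Rightarrow> enat" where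
  "pw G A = pw_sub G A (carrier G)"

end

theory Submission imports Defs begin

text \<open>Freely reducing a palindromic word keeps it palindromic: an adjacent cancelling pair
  is removed together with its mirror image (or, next to the middle letter, the two overlapping
  pairs are removed at once). So every palindromic word over X, reduced or not, evaluates to a
  palindrome, and a homomorphism maps the palindromes over X onto the palindromes over the image
  of X. The first inequality follows by projecting a shortest palindromic factorisation of g. For
  the second, lift a shortest factorisation of gH to palindromes p1, ..., pn of G; then
  g = p1 ... pn k with k in H, and palindromic length is subadditive.\<close>

definition cancels :: "'a \<times> bool \<Rightarrow> 'a \<times> bool \<Rightarrow> bool" where
  "cancels a b \<longleftrightarrow> fst a = fst b \<and> snd a \<noteq> snd b"

lemma cancels_sym: "cancels a b \<longleftrightarrow> cancels b a"
  by (auto simp: cancels_def)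

lemma not_cancels_self [simp]: "\<not> cancels a a"
  by (simp add: cancels_def)

lemma reduced_word_iff_successively:
  "reduced_word w \<longleftrightarrow> successively (\<lambda>a b. \<not> cancels a b) w"
  by (simp add: reduced_word_def successively_conv_nth cancels_def)

lemma not_successively_split:
  "\<not> successively P w \<Longrightarrow> \<exists>u a b v. w = u @ a # b # v \<and> \<not> P a b"
proof (induction P w rule: successively.induct)
  case (3 P x y xs)
  show ?case
  proof (cases "P x y")
    case True
    with "3.prems" obtain u a b v where "y # xs = u @ a # b # v" "\<not> P a b"
      using "3.IH" by auto
    then show ?thesis by (metis append_Cons)
  qed (metis append_Nil)
qed auto

lemma palindrome_split:
  assumes "rev w = w"
  obtains u m where "w = u @ m @ rev u" and "length m \<le> 1"
proof -
  define k where "k = length w div 2"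
  define m where "m = take (length w - 2 * k) (drop k w)"
  have "rev (take k w) = drop (length w - k) w"
    using assms by (simp add: rev_take)
  also have "\<dots> = drop (length w - 2 * k) (drop k w)"
    by (simp add: k_def)
  finally have "w = take k w @ m @ rev (take k w)"
    by (simp only: m_def append_take_drop_id)
  moreover have "length m \<le> 1"
    by (simp add: m_def k_def)
  ultimately show thesis by (rule that)
qed

definition mult_list :: "('a, 'b) monoid_scheme \<Rightarrow> 'a list \<Rightarrow> 'a" where
  "mult_list G ps = foldr (\<lambda>p acc. p \<otimes>\<^bsub>G\<^esub> acc) ps \<one>\<^bsub>G\<^esub>"

lemma pal_length_le:
  "set ps \<subseteq> palindromes G A \<Longrightarrow> mult_list G ps = g \<Longrightarrow> pal_length G A g \<le> length ps"
  unfolding pal_length_def mult_list_def by (rule Inf_lower) auto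

lemma pal_length_attained:
  assumes "pal_length G A g \<noteq> \<infinity>"
  obtains ps where "set ps \<subseteq> palindromes G A" and "mult_list G ps = g"
    and "pal_length G A g = length ps"
proof -
  let ?L = "(\<lambda>ps. enat (length ps)) ` {ps. set ps \<subseteq> palindromes G A \<and> mult_list G ps = g}"
  have "pal_length G A g = Inf ?L"
    by (simp add: pal_length_def mult_list_def)
  moreover have "?L \<noteq> {}"
  proof
    assume "?L = {}"
    with assms calculation show False by (simp add: top_enat_def)
  qed
  then obtain l where "l \<in> ?L"
    by blast
  then have "Inf ?L \<in> ?L"
    by (rule wellorder_InfI)
  ultimately show thesis
    using that by auto
qed

lemma eval_word_append:
  "eval_word G (u @ v) = foldr (\<lambda>(x, b) acc. (if b then x else inv\<^bsub>G\<^esub> x) \<otimes>\<^bsub>G\<^esub> acc) u (eval_word G v)"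
  by (simp add: eval_word_def)

context group
begin

lemma eval_word_closed: "fst ` set w \<subseteq> carrier G \<Longrightarrow> eval_word G w \<in> carrier G"
  by (induction w) (auto simp: eval_word_def)

lemma eval_word_cancel:
  assumes "cancels a b" and "fst a \<in> carrier G" and "fst ` set v \<subseteq> carrier G"
  shows "eval_word G (u @ a # b # v) = eval_word G (u @ v)"
proof -
  have "eval_word G (a # b # v) = eval_word G v"
    using assms eval_word_closed[OF assms(3)]
    by (cases a; cases b) (auto simp: cancels_def eval_word_def m_assoc[symmetric])
  then show ?thesis by (simp only: eval_word_append)
qed

lemma shorter_palindrome_same_eval:
  assumes "rev w = w" and "\<not> reduced_word w" and "fst ` set w \<subseteq> carrier G"
  shows "\<exists>w'. rev w' = w' \<and> length w' < length w \<and> set w' \<subseteq> set w \<and> eval_word G w' = eval_word G w"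
proof -
  obtain u m where w: "w = u @ m @ rev u" and m: "length m \<le> 1"
    using palindrome_split[OF assms(1)] .
  have m_rev: "rev m = m"
    using m by (cases m) auto
  have not_reduced: "\<not> successively (\<lambda>a b. \<not> cancels a b) (u @ m @ rev u)"
    using assms(2) w by (simp add: reduced_word_iff_successively)
  then consider "\<not> successively (\<lambda>a b. \<not> cancels a b) u"
    | a c u' where "u = u' @ [a]" and "m = [c]" and "cancels a c"
  proof (cases "successively (\<lambda>a b. \<not> cancels a b) u")
    case True
    then have rev_u: "successively (\<lambda>a b. \<not> cancels a b) (rev u)"
      by (simp add: cancels_sym)
    show ?thesis
    proof (cases u rule: rev_cases)
      case Nil
      then show ?thesis using not_reduced m by (cases m) auto
    next
      case (snoc u' a)
      show ?thesis
      proof (cases m)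
        case Nil
        then show ?thesis
          using not_reduced True rev_u snoc by (simp add: successively_append_iff)
      next
        case (Cons c m')
        then have "m = [c]" using m by simp
        moreover have "cancels a c"
          using not_reduced True rev_u snoc \<open>m = [c]\<close> cancels_sym[of c a]
          by (auto simp: successively_append_iff)
        ultimately show ?thesis using that(2) snoc by blast
      qed
    qed
  qed
  then show ?thesis
  proof cases
    case 1
    then obtain u1 a b u2 where u: "u = u1 @ a # b # u2" and ab: "cancels a b"
      using not_successively_split by fastforce
    let ?w' = "(u1 @ u2) @ m @ rev (u1 @ u2)"
    have carrier: "fst a \<in> carrier G" "fst b \<in> carrier G" "fst ` set u1 \<subseteq> carrier G"
      "fst ` set u2 \<subseteq> carrier G" "fst ` set m \<subseteq> carrier G"
      using assms(3) w u by auto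
    have "eval_word G w = eval_word G (u1 @ a # b # (u2 @ m @ rev u2 @ b # a # rev u1))"
      using w u by simp
    also have "\<dots> = eval_word G (u1 @ (u2 @ m @ rev u2 @ b # a # rev u1))"
      using ab carrier by (intro eval_word_cancel) auto
    also have "\<dots> = eval_word G ((u1 @ u2 @ m @ rev u2) @ b # a # rev u1)"
      by simp
    also have "\<dots> = eval_word G ((u1 @ u2 @ m @ rev u2) @ rev u1)"
      using ab carrier by (intro eval_word_cancel) (auto simp: cancels_sym)
    also have "\<dots> = eval_word G ?w'"
      by simp
    finally have "eval_word G ?w' = eval_word G w"
      by (rule sym)
    moreover have "rev ?w' = ?w'" and "length ?w' < length w" and "set ?w' \<subseteq> set w"
      using w u m_rev by simp_all auto
    ultimately show ?thesis by (intro exI[of _ ?w']) simp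
  next
    case 2
    let ?w' = "u' @ [a] @ rev u'"
    have "eval_word G w = eval_word G (u' @ a # c # a # rev u')"
      using w 2 by simp
    also have "\<dots> = eval_word G ?w'"
      using eval_word_cancel[of a c "a # rev u'" u'] 2 w assms(3) by simp
    finally have "eval_word G ?w' = eval_word G w"
      by (rule sym)
    moreover have "rev ?w' = ?w'" and "length ?w' < length w" and "set ?w' \<subseteq> set w"
      using w 2 by simp_all auto
    ultimately show ?thesis by (intro exI[of _ ?w']) simp
  qed
qed

lemma eval_palindromic_word_in_palindromes:
  assumes "A \<subseteq> carrier G" and "fst ` set w \<subseteq> A" and "rev w = w"
  shows "eval_word G w \<in> palindromes G A"
  using assms(2,3)
proof (induction w rule: length_induct)
  case (1 w)
  show ?case
  proof (cases "reduced_word w")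
    case True
    then show ?thesis using "1.prems" by (auto simp: palindromes_def)
  next
    case False
    then obtain w' where "rev w' = w'" "length w' < length w" "set w' \<subseteq> set w"
      "eval_word G w' = eval_word G w"
      using shorter_palindrome_same_eval "1.prems" assms(1) by blast
    then show ?thesis using "1.IH" "1.prems" by (metis image_mono subset_trans)
  qed
qed

lemma palindromes_closed: "A \<subseteq> carrier G \<Longrightarrow> palindromes G A \<subseteq> carrier G"
  by (auto simp: palindromes_def intro!: eval_word_closed)

lemma mult_list_closed: "set ps \<subseteq> carrier G \<Longrightarrow> mult_list G ps \<in> carrier G"
  by (induction ps) (auto simp: mult_list_def)

lemma mult_list_append:
  "set ps \<subseteq> carrier G \<Longrightarrow> set qs \<subseteq> carrier G \<Longrightarrow>
    mult_list G (ps @ qs) = mult_list G ps \<otimes> mult_list G qs"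
  by (induction ps) (auto simp: mult_list_def m_assoc intro: mult_list_closed[unfolded mult_list_def])

lemma pal_length_mult_le:
  assumes "A \<subseteq> carrier G"
  shows "pal_length G A (x \<otimes> y) \<le> pal_length G A x + pal_length G A y"
proof (cases "pal_length G A x = \<infinity> \<or> pal_length G A y = \<infinity>")
  case False
  then have "pal_length G A x \<noteq> \<infinity>" and "pal_length G A y \<noteq> \<infinity>"
    by simp_all
  then obtain ps qs where
    ps: "set ps \<subseteq> palindromes G A" "mult_list G ps = x" "pal_length G A x = length ps" and
    qs: "set qs \<subseteq> palindromes G A" "mult_list G qs = y" "pal_length G A y = length qs"
    by (elim pal_length_attained)
  have "mult_list G (ps @ qs) = x \<otimes> y"
    using ps qs palindromes_closed[OF assms] by (simp add: mult_list_append)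
  then have "pal_length G A (x \<otimes> y) \<le> length (ps @ qs)"
    using ps qs by (intro pal_length_le) auto
  then show ?thesis using ps qs by simp
qed auto

end

context group_hom
begin

lemma hom_eval_word:
  "fst ` set w \<subseteq> carrier G \<Longrightarrow> h (eval_word G w) = eval_word H (map (apfst h) w)"
proof (induction w)
  case (Cons a w)
  then show ?case
    using G.eval_word_closed[of w]
    by (cases a) (auto simp: eval_word_def hom_inv)
qed (simp add: eval_word_def)

lemma hom_mult_list: "set ps \<subseteq> carrier G \<Longrightarrow> h (mult_list G ps) = mult_list H (map h ps)"
  by (induction ps) (auto simp: mult_list_def G.mult_list_closed[unfolded mult_list_def])

lemma image_palindromes:
  assumes "A \<subseteq> carrier G"
  shows "h ` palindromes G A = palindromes H (h ` A)"
proof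
  show "h ` palindromes G A \<subseteq> palindromes H (h ` A)"
  proof clarify
    fix p assume "p \<in> palindromes G A"
    then obtain w where w: "p = eval_word G w" "fst ` set w \<subseteq> A" "rev w = w"
      by (auto simp: palindromes_def)
    have "h ` A \<subseteq> carrier H"
      using assms by auto
    moreover have "fst ` set (map (apfst h) w) \<subseteq> h ` A"
      using w(2) by (simp add: image_image) blast
    moreover have "rev (map (apfst h) w) = map (apfst h) w"
      using w(3) by (metis rev_map)
    ultimately have "eval_word H (map (apfst h) w) \<in> palindromes H (h ` A)"
      by (rule H.eval_palindromic_word_in_palindromes)
    moreover have "h p = eval_word H (map (apfst h) w)"
      using w(1,2) assms hom_eval_word[of w] by auto
    ultimately show "h p \<in> palindromes H (h ` A)"
      by simp
  qed
next
  show "palindromes H (h ` A) \<subseteq> h ` palindromes G A"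
  proof
    fix q assume "q \<in> palindromes H (h ` A)"
    then obtain v where v: "q = eval_word H v" "fst ` set v \<subseteq> h ` A" "rev v = v"
      by (auto simp: palindromes_def)
    \<comment> \<open>Lifting the letters by one fixed section of h keeps the word palindromic.\<close>
    define w where "w = map (apfst (inv_into A h)) v"
    have w_letters: "fst ` set w \<subseteq> A"
      using v(2) by (auto simp: w_def inv_into_into)
    have "map (apfst h) w = v"
      unfolding w_def map_map
    proof (rule map_idI)
      fix x assume "x \<in> set v"
      then have "fst x \<in> h ` A"
        using v(2) by blast
      then show "(apfst h \<circ> apfst (inv_into A h)) x = x"
        by (cases x) (simp add: f_inv_into_f)
    qed
    then have "h (eval_word G w) = q"
      using w_letters assms hom_eval_word[of w] v(1) by auto
    moreover have "rev w = w"
      using v(3) unfolding w_def by (metis rev_map)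
    then have "eval_word G w \<in> palindromes G A"
      using assms w_letters by (intro G.eval_palindromic_word_in_palindromes)
    ultimately show "q \<in> h ` palindromes G A"
      by blast
  qed
qed

lemma pal_length_image_le:
  assumes "A \<subseteq> carrier G" and "g \<in> carrier G"
  shows "pal_length H (h ` A) (h g) \<le> pal_length G A g"
proof (cases "pal_length G A g = \<infinity>")
  case False
  then obtain ps where ps: "set ps \<subseteq> palindromes G A" "mult_list G ps = g"
    "pal_length G A g = length ps"
    by (elim pal_length_attained)
  have "set (map h ps) \<subseteq> palindromes H (h ` A)"
    using ps(1) image_palindromes[OF assms(1)] by auto
  moreover have "mult_list H (map h ps) = h g"
    using ps(1,2) G.palindromes_closed[OF assms(1)] hom_mult_list by auto
  ultimately have "pal_length H (h ` A) (h g) \<le> length (map h ps)"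
    by (rule pal_length_le)
  then show ?thesis
    using ps(3) by simp
qed simp

lemma pal_length_le_image_plus_kernel:
  assumes "A \<subseteq> carrier G" and g: "g \<in> carrier G"
  shows "pal_length G A g \<le> pal_length H (h ` A) (h g) + pw_sub G A (kernel G H h)"
proof (cases "pal_length H (h ` A) (h g) = \<infinity>")
  case False
  then obtain qs where qs: "set qs \<subseteq> palindromes H (h ` A)" "mult_list H qs = h g"
    "pal_length H (h ` A) (h g) = length qs"
    by (elim pal_length_attained)
  have "qs \<in> lists (h ` palindromes G A)"
    using qs(1) image_palindromes[OF assms(1)] by auto
  then obtain ps where ps: "set ps \<subseteq> palindromes G A" "qs = map h ps"
    by (auto simp: lists_image)
  have ps_carrier: "set ps \<subseteq> carrier G"
    using ps(1) G.palindromes_closed[OF assms(1)] by blast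
  define p where "p = mult_list G ps"
  define k where "k = inv\<^bsub>G\<^esub> p \<otimes>\<^bsub>G\<^esub> g"
  have p: "p \<in> carrier G" "h p = h g"
    using ps_carrier hom_mult_list ps(2) qs(2) by (auto simp: p_def G.mult_list_closed)
  then have "k \<in> kernel G H h"
    using g by (simp add: k_def kernel_def hom_inv)
  then have k_le: "pal_length G A k \<le> pw_sub G A (kernel G H h)"
    unfolding pw_sub_def by (rule SUP_upper)
  have p_le: "pal_length G A p \<le> pal_length H (h ` A) (h g)"
    using pal_length_le[OF ps(1) p_def[symmetric]] ps(2) qs(3) by simp
  have "g = p \<otimes>\<^bsub>G\<^esub> k"
    using p(1) g by (simp add: k_def G.m_assoc[symmetric])
  then have "pal_length G A g \<le> pal_length G A p + pal_length G A k"
    using G.pal_length_mult_le[OF assms(1)] by simp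
  also have "\<dots> \<le> pal_length H (h ` A) (h g) + pw_sub G A (kernel G H h)"
    using p_le k_le by (rule add_mono)
  finally show ?thesis .
qed simp

lemma pw_image_le:
  assumes "A \<subseteq> carrier G" and "h ` carrier G = carrier H"
  shows "pw H (h ` A) \<le> pw G A"
  unfolding pw_def pw_sub_def
proof (rule SUP_least)
  fix y assume "y \<in> carrier H"
  then obtain g where g: "g \<in> carrier G" "y = h g"
    using assms(2) by blast
  then have "pal_length H (h ` A) y \<le> pal_length G A g"
    using pal_length_image_le[OF assms(1)] by simp
  also have "\<dots> \<le> (SUP g\<in>carrier G. pal_length G A g)"
    using g(1) by (rule SUP_upper)
  finally show "pal_length H (h ` A) y \<le> (SUP g\<in>carrier G. pal_length G A g)" .
qed

lemma pw_le_image_plus_kernel: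
  assumes "A \<subseteq> carrier G"
  shows "pw G A \<le> pw H (h ` A) + pw_sub G A (kernel G H h)"
  unfolding pw_def[of G] pw_sub_def[of G A "carrier G"]
proof (rule SUP_least)
  fix g assume g: "g \<in> carrier G"
  have "pal_length H (h ` A) (h g) \<le> pw H (h ` A)"
    unfolding pw_def pw_sub_def using g by (intro SUP_upper) simp
  then show "pal_length G A g \<le> pw H (h ` A) + pw_sub G A (kernel G H h)"
    using pal_length_le_image_plus_kernel[OF assms g] add_right_mono order_trans by blast
qed

end

lemma (in normal) kernel_r_coset_Mod: "kernel G (G Mod H) (\<lambda>x. H #> x) = H"
  using rcos_const rcos_self[OF _ subgroup_axioms]
  by (auto simp: kernel_def)

theorem lemma2p6:
  fixes G :: "('a, 'b) monoid_scheme" and S H :: "'a set"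
  assumes "group G"
    and "S \<subseteq> carrier G"
    and "generate G S = carrier G"
    and "H \<lhd> G"
  shows "pw (G Mod H) ((\<lambda>x. H #>\<^bsub>G\<^esub> x) ` S) \<le> pw G S
       \<and> pw G S \<le> pw (G Mod H) ((\<lambda>x. H #>\<^bsub>G\<^esub> x) ` S) + pw_sub G S H"
proof -
  interpret normal H G by (rule assms(4))
  interpret group_hom G "G Mod H" "\<lambda>x. H #>\<^bsub>G\<^esub> x"
    by (simp add: group_hom_def group_hom_axioms_def factorgroup_is_group r_coset_hom_Mod)
  show ?thesis
    using pw_image_le[OF assms(2) carrier_FactGroup[symmetric]]
      pw_le_image_plus_kernel[OF assms(2)]
    by (simp add: kernel_r_coset_Mod)
qed

end
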